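(* Let $G$ be a finite simple graph of order $n$ whose odd girth is $2k+1$ for some integer $k\geq 1$. Then $\mathrm{es}_{\Delta}(G)\leq \frac{k+1}{2k+1}\,n$.
   Context: The odd girth of $G$ is the length of a shortest odd cycle in $G$. $\mathrm{es}_{\Delta}(G)$ is the minimum number of edges of $G$ whose removal results in a subgraph with maximum degree $\Delta(G)-1$. *)

theory Defs
  imports Complex_Main
begin

definition simple_graph :: "'a set \<Rightarrow> 'a set set \<Rightarrow> bool" where
  "simple_graph V E \<longleftrightarrow> finite V \<and>
     (\<forall>e\<in>E. \<exists>u v. e = {u, v} \<and> u \<noteq> v \<and> u \<in> V \<and> v \<in> V)"

definition degree :: "'a set set \<Rightarrow> 'a \<Rightarrow> nat" where
  "degree E v = card {e\<in>E. v \<in> e}"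

definition max_degree :: "'a set \<Rightarrow> 'a set set \<Rightarrow> nat" where
  "max_degree V E = (if V = {} then 0 else Max (degree E ` V))"

definition is_cycle :: "'a set set \<Rightarrow> 'a list \<Rightarrow> bool" where
  "is_cycle E cs \<longleftrightarrow> length cs \<ge> 3 \<and> distinct cs \<and>
     (\<forall>i < length cs. {cs ! i, cs ! ((i + 1) mod length cs)} \<in> E)"

definition has_odd_cycle :: "'a set set \<Rightarrow> bool" where
  "has_odd_cycle E \<longleftrightarrow> (\<exists>cs. is_cycle E cs \<and> odd (length cs))"

text \<open>Odd girth: length of a shortest odd cycle (meaningful when an odd cycle exists).\<close>
definition odd_girth :: "'a set set \<Rightarrow> nat" where
  "odd_girth E = (LEAST l. \<exists>cs. is_cycle E cs \<and> odd (length cs) \<and> length cs = l)"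

definition es_Delta :: "'a set \<Rightarrow> 'a set set \<Rightarrow> nat" where
  "es_Delta V E = Min {card F | F. F \<subseteq> E \<and> max_degree V (E - F) = max_degree V E - 1}"

end

(* Let Delta be the maximum degree of G. Take two copies of G and join every vertex v to its
   twin by Delta - deg v parallel edges. This multigraph is Delta-regular, so by Hall's theorem
   its adjacency relation contains a permutation; restricted to one copy it gives an injective
   map sigma along edges of G whose trajectories are vertex-disjoint paths and cycles, every
   vertex of degree Delta lying in the interior of one of them. The interior of a path or cycle
   on m vertices is covered by ceil(m/2) of its edges, and ceil(m/2) <= (k+1) m / (2k+1) since
   odd cycles have at least 2k+1 vertices. Deleting a smallest set of these edges meeting
   all vertices of degree Delta lowers the maximum degree by exactly one. *)

theory Submission
  imports Defs "HOL-Combinatorics.Orbits"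
begin

section \<open>Hall's theorem\<close>

definition Hall_condition :: "'x set \<Rightarrow> ('x \<Rightarrow> 'y set) \<Rightarrow> bool" where
  "Hall_condition A N \<longleftrightarrow> (\<forall>X\<subseteq>A. card X \<le> card (\<Union>(N ` X)))"

lemma Hall_condition_subset: "Hall_condition A N \<Longrightarrow> X \<subseteq> A \<Longrightarrow> Hall_condition X N"
  unfolding Hall_condition_def by blast

lemma Hall_condition_Diff_critical:
  assumes "finite A" and "Hall_condition A N" and "X \<subseteq> A" and "card (\<Union>(N ` X)) \<le> card X"
  shows "Hall_condition (A - X) (\<lambda>x. N x - \<Union>(N ` X))"
  unfolding Hall_condition_def
proof (intro allI impI)
  fix Y assume Y: "Y \<subseteq> A - X"
  have "finite X" "finite Y" using assms(1,3) Y by (auto intro: finite_subset)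
  moreover have "Y \<inter> X = {}" using Y by blast
  ultimately have "card Y + card X = card (Y \<union> X)" by (simp add: card_Un_disjoint)
  also have "\<dots> \<le> card (\<Union>(N ` (Y \<union> X)))"
    using assms(2,3) Y unfolding Hall_condition_def by (metis Diff_subset Un_subset_iff subset_trans)
  also have "\<Union>(N ` (Y \<union> X)) = \<Union>((\<lambda>x. N x - \<Union>(N ` X)) ` Y) \<union> \<Union>(N ` X)" by blast
  also have "card \<dots> \<le> card (\<Union>((\<lambda>x. N x - \<Union>(N ` X)) ` Y)) + card (\<Union>(N ` X))"
    by (rule card_Un_le)
  finally show "card Y \<le> card (\<Union>((\<lambda>x. N x - \<Union>(N ` X)) ` Y))" using assms(4) by linarith
qed

lemma Hall_condition_Diff_surplus:
  assumes "finite A" and "\<And>x. x \<in> A \<Longrightarrow> finite (N x)"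
    and "\<And>X. X \<subseteq> A \<Longrightarrow> X \<noteq> {} \<Longrightarrow> X \<noteq> A \<Longrightarrow> card X < card (\<Union>(N ` X))"
    and "a \<in> A"
  shows "Hall_condition (A - {a}) (\<lambda>x. N x - {y})"
  unfolding Hall_condition_def
proof (intro allI impI)
  fix X assume X: "X \<subseteq> A - {a}"
  show "card X \<le> card (\<Union>((\<lambda>x. N x - {y}) ` X))"
  proof (cases "X = {}")
    case False
    define S where "S = \<Union>((\<lambda>x. N x - {y}) ` X)"
    have "finite X" using X assms(1) by (auto intro: finite_subset)
    then have "finite S" using X assms(2) unfolding S_def by auto
    have "card X < card (\<Union>(N ` X))" using assms(3)[of X] X False assms(4) by auto
    also have "\<dots> \<le> card ({y} \<union> S)"
      using \<open>finite S\<close> unfolding S_def by (intro card_mono) auto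
    also have "\<dots> \<le> Suc (card S)"
      using card_Un_le[of "{y}" S] by simp
    finally have "card X \<le> card S" by simp
    then show ?thesis unfolding S_def .
  qed simp
qed

lemma inj_selection_Un:
  assumes g: "inj_on g X" "\<forall>x\<in>X. g x \<in> N x \<inter> T" and h: "inj_on h Y" "\<forall>y\<in>Y. h y \<in> N y - T"
  shows "\<exists>f. inj_on f (X \<union> Y) \<and> (\<forall>x\<in>X \<union> Y. f x \<in> N x)"
proof (intro exI conjI)
  show "inj_on (\<lambda>x. if x \<in> X then g x else h x) (X \<union> Y)"
    using g h unfolding inj_on_def by (metis DiffD2 IntD2 Un_iff)
  show "\<forall>x\<in>X \<union> Y. (if x \<in> X then g x else h x) \<in> N x" using g(2) h(2) by auto
qed

lemma Hall_marriage:
  assumes "finite A" and "\<And>x. x \<in> A \<Longrightarrow> finite (N x)" and "Hall_condition A N"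
  shows "\<exists>f. inj_on f A \<and> (\<forall>x\<in>A. f x \<in> N x)"
  using assms
proof (induction "card A" arbitrary: A N rule: less_induct)
  case less
  have rest: "\<exists>h. inj_on h (A - X) \<and> (\<forall>x\<in>A - X. h x \<in> N x - T)"
    if "X \<subseteq> A" "X \<noteq> {}" "Hall_condition (A - X) (\<lambda>x. N x - T)" for X T
  proof (rule less.hyps)
    show "card (A - X) < card A" using that(1,2) less.prems(1) by (intro psubset_card_mono) auto
  qed (use that(3) less.prems(1,2) in auto)
  show ?case
  proof (cases "\<exists>X\<subseteq>A. X \<noteq> {} \<and> X \<noteq> A \<and> card (\<Union>(N ` X)) \<le> card X")
    case True
    then obtain X where X: "X \<subseteq> A" "X \<noteq> {}" "X \<noteq> A" "card (\<Union>(N ` X)) \<le> card X" by blast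
    have "card X < card A" using X less.prems(1) by (intro psubset_card_mono) auto
    moreover have "finite X" using X(1) less.prems(1) by (rule finite_subset)
    moreover have "Hall_condition X N" using less.prems(3) X(1) by (rule Hall_condition_subset)
    ultimately have "\<exists>g. inj_on g X \<and> (\<forall>x\<in>X. g x \<in> N x)"
      using less.prems(2) X(1) by (intro less.hyps) auto
    then obtain g where g: "inj_on g X" "\<forall>x\<in>X. g x \<in> N x \<inter> \<Union>(N ` X)" by blast
    have "Hall_condition (A - X) (\<lambda>x. N x - \<Union>(N ` X))"
      using less.prems(1,3) X(1,4) by (rule Hall_condition_Diff_critical)
    then obtain h where "inj_on h (A - X)" "\<forall>x\<in>A - X. h x \<in> N x - \<Union>(N ` X)"
      using rest X(1,2) by blast
    from inj_selection_Un[OF g this] show ?thesis using X(1) by (simp add: Un_absorb1)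
  next
    case no_critical: False
    show ?thesis
    proof (cases "A = {}")
      case False
      then obtain a where a: "a \<in> A" by blast
      have "card {a} \<le> card (\<Union>(N ` {a}))"
        using less.prems(3) a unfolding Hall_condition_def by blast
      then have "N a \<noteq> {}" by auto
      then obtain y where y: "y \<in> N a" by blast
      have "Hall_condition (A - {a}) (\<lambda>x. N x - {y})"
        using less.prems(1,2) _ a
      proof (rule Hall_condition_Diff_surplus)
        show "card X < card (\<Union>(N ` X))" if "X \<subseteq> A" "X \<noteq> {}" "X \<noteq> A" for X
          using no_critical that by (meson not_le)
      qed
      then obtain h where "inj_on h (A - {a})" "\<forall>x\<in>A - {a}. h x \<in> N x - {y}"
        using rest a by blast
      from inj_selection_Un[of "\<lambda>_. y" "{a}" N "{y}", OF _ _ this] show ?thesis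
        using a y by (simp add: insert_absorb)
    qed simp
  qed
qed

lemma regular_weight_matching:
  fixes w :: "'x \<Rightarrow> 'x \<Rightarrow> nat"
  assumes A: "finite A" and "0 < d"
    and row: "\<And>x. x \<in> A \<Longrightarrow> (\<Sum>y\<in>A. w x y) = d"
    and col: "\<And>y. y \<in> A \<Longrightarrow> (\<Sum>x\<in>A. w x y) \<le> d"
  shows "\<exists>f. inj_on f A \<and> (\<forall>x\<in>A. f x \<in> A \<and> 0 < w x (f x))"
proof -
  define N where "N x = {y\<in>A. 0 < w x y}" for x
  have hall: "Hall_condition A N"
    unfolding Hall_condition_def
  proof (intro allI impI)
    fix X assume X: "X \<subseteq> A"
    define NX where "NX = \<Union>(N ` X)"
    have NX: "NX \<subseteq> A" unfolding NX_def N_def by auto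
    have "d * card X = (\<Sum>x\<in>X. \<Sum>y\<in>A. w x y)" using row X by (simp add: subset_iff)
    also have "\<dots> = (\<Sum>x\<in>X. \<Sum>y\<in>NX. w x y)"
    proof (rule sum.cong[OF refl])
      show "(\<Sum>y\<in>A. w x y) = (\<Sum>y\<in>NX. w x y)" if "x \<in> X" for x
        using that by (intro sum.mono_neutral_right[OF A NX]) (auto simp: NX_def N_def)
    qed
    also have "\<dots> = (\<Sum>y\<in>NX. \<Sum>x\<in>X. w x y)" by (rule sum.swap)
    also have "\<dots> \<le> (\<Sum>y\<in>NX. \<Sum>x\<in>A. w x y)" using A X by (intro sum_mono sum_mono2) simp_all
    also have "\<dots> \<le> (\<Sum>y\<in>NX. d)" using NX by (intro sum_mono col) auto
    also have "\<dots> = d * card NX" by simp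
    finally show "card X \<le> card (\<Union>(N ` X))" using \<open>0 < d\<close> unfolding NX_def by simp
  qed
  have "\<And>x. x \<in> A \<Longrightarrow> finite (N x)" using A unfolding N_def by simp
  then have "\<exists>f. inj_on f A \<and> (\<forall>x\<in>A. f x \<in> N x)" using A hall by (intro Hall_marriage)
  then show ?thesis unfolding N_def by auto
qed

section \<open>Paths and cycles through the vertices of maximum degree\<close>

lemma simple_graph_edgeE:
  assumes "simple_graph V E" and "e \<in> E"
  obtains u v where "e = {u, v}" and "u \<noteq> v" and "u \<in> V" and "v \<in> V"
  using assms unfolding simple_graph_def by meson

lemma simple_graph_finite_edges:
  assumes "simple_graph V E"
  shows "finite E"
proof (rule finite_subset)
  show "E \<subseteq> Pow V" using assms by (auto elim: simple_graph_edgeE)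
  show "finite (Pow V)" using assms unfolding simple_graph_def by simp
qed

lemma simple_graph_no_loop:
  assumes "simple_graph V E"
  shows "{v} \<notin> E"
proof
  assume "{v} \<in> E"
  then obtain a b where "{v} = {a, b}" "a \<noteq> b" using assms by (auto elim: simple_graph_edgeE)
  then show False by auto
qed

lemma degree_eq_card_neighbours:
  assumes "simple_graph V E"
  shows "degree E v = card {u\<in>V. {v, u} \<in> E}"
proof -
  have "bij_betw (\<lambda>u. {v, u}) {u\<in>V. {v, u} \<in> E} {e\<in>E. v \<in> e}"
  proof (rule bij_betwI')
    fix e assume e: "e \<in> {e\<in>E. v \<in> e}"
    then obtain a b where ab: "e = {a, b}" "a \<in> V" "b \<in> V"
      using assms by (auto elim: simple_graph_edgeE)
    with e show "\<exists>u\<in>{u\<in>V. {v, u} \<in> E}. e = {v, u}" by (auto simp: insert_commute)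
  qed (auto simp: doubleton_eq_iff)
  then show ?thesis unfolding degree_def by (simp add: bij_betw_same_card)
qed

text \<open>The weights of two copies of \<open>G\<close> in which every vertex \<open>v\<close> is joined to its twin by
  \<open>\<Delta> - deg v\<close> parallel edges; when \<open>\<Delta>\<close> bounds all degrees this multigraph is \<open>\<Delta>\<close>-regular.\<close>
definition twin_weight :: "'a set set \<Rightarrow> nat \<Rightarrow> 'a \<times> bool \<Rightarrow> 'a \<times> bool \<Rightarrow> nat" where
  "twin_weight E \<Delta> p q =
     (if snd p = snd q then (if {fst p, fst q} \<in> E then 1 else 0)
      else if fst p = fst q then \<Delta> - degree E (fst p) else 0)"

lemma twin_weight_commute: "twin_weight E \<Delta> p q = twin_weight E \<Delta> q p"
  unfolding twin_weight_def by (simp add: insert_commute eq_commute)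

lemma twin_weight_pos_same_side:
  "0 < twin_weight E \<Delta> p q \<Longrightarrow> snd q = snd p \<Longrightarrow> {fst p, fst q} \<in> E"
  unfolding twin_weight_def by (simp split: if_splits)

lemma twin_weight_pos_other_side:
  "0 < twin_weight E \<Delta> p q \<Longrightarrow> snd q \<noteq> snd p \<Longrightarrow> fst q = fst p \<and> degree E (fst p) < \<Delta>"
  unfolding twin_weight_def by (auto split: if_splits)

lemma twin_weight_row_sum:
  assumes G: "simple_graph V E" and "v \<in> V" and "degree E v \<le> \<Delta>"
  shows "(\<Sum>q\<in>V \<times> UNIV. twin_weight E \<Delta> (v, b) q) = \<Delta>"
proof -
  have fin: "finite V" using G unfolding simple_graph_def by blast
  have "(\<Sum>q\<in>V \<times> UNIV. twin_weight E \<Delta> (v, b) q) = (\<Sum>u\<in>V. \<Sum>j\<in>UNIV. twin_weight E \<Delta> (v, b) (u, j))"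
    by (simp add: sum.cartesian_product)
  also have "\<dots> = (\<Sum>u\<in>V. twin_weight E \<Delta> (v, b) (u, b) + twin_weight E \<Delta> (v, b) (u, \<not> b))"
    by (intro sum.cong refl) (cases b; simp add: UNIV_bool)
  also have "\<dots> = (\<Sum>u\<in>V. (if {v, u} \<in> E then 1 else 0) + (if v = u then \<Delta> - degree E v else 0))"
    by (simp add: twin_weight_def cong: if_cong)
  also have "\<dots> = (\<Sum>u\<in>V. if {v, u} \<in> E then 1 else 0) + (\<Delta> - degree E v)"
    using fin \<open>v \<in> V\<close> by (simp add: sum.distrib)
  also have "(\<Sum>u\<in>V. if {v, u} \<in> E then 1 else 0) = card {u\<in>V. {v, u} \<in> E}"
    using fin by (simp add: sum.inter_filter[symmetric])
  also have "\<dots> = degree E v" using G by (rule degree_eq_card_neighbours[symmetric])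
  finally show ?thesis using \<open>degree E v \<le> \<Delta>\<close> by simp
qed

text \<open>The edges \<open>{v, \<sigma> v}\<close> with \<open>v \<in> D\<close> form vertex-disjoint paths and cycles of \<open>G\<close>, directed
  by \<open>\<sigma>\<close>; \<open>D \<inter> \<sigma> ` D\<close> is the set of their vertices having both a predecessor and a successor.\<close>
definition path_cycle_map :: "'a set set \<Rightarrow> 'a set \<Rightarrow> ('a \<Rightarrow> 'a) \<Rightarrow> bool" where
  "path_cycle_map E D \<sigma> \<longleftrightarrow> inj_on \<sigma> D \<and> (\<forall>v\<in>D. {v, \<sigma> v} \<in> E)"

lemma path_cycle_map_subset:
  "path_cycle_map E D \<sigma> \<Longrightarrow> D' \<subseteq> D \<Longrightarrow> path_cycle_map E D' \<sigma>"
  unfolding path_cycle_map_def by (auto intro: inj_on_subset)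

lemma path_cycle_map_through_max_degree:
  assumes G: "simple_graph V E" and "0 < \<Delta>" and deg: "\<And>v. v \<in> V \<Longrightarrow> degree E v \<le> \<Delta>"
  shows "\<exists>D \<sigma>. D \<subseteq> V \<and> path_cycle_map E D \<sigma> \<and> {v\<in>V. degree E v = \<Delta>} \<subseteq> D \<inter> \<sigma> ` D"
proof -
  define A where "A = V \<times> (UNIV :: bool set)"
  have A: "finite A" using G unfolding A_def simple_graph_def by simp
  have row: "(\<Sum>q\<in>A. twin_weight E \<Delta> p q) = \<Delta>" if "p \<in> A" for p
    using that deg twin_weight_row_sum[OF G] unfolding A_def by auto
  have col: "(\<Sum>p\<in>A. twin_weight E \<Delta> p q) \<le> \<Delta>" if "q \<in> A" for q
    using row[OF that] by (simp add: twin_weight_commute)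
  obtain f where f_inj: "inj_on f A" and f: "\<forall>p\<in>A. f p \<in> A \<and> 0 < twin_weight E \<Delta> p (f p)"
    using regular_weight_matching[OF A \<open>0 < \<Delta>\<close> row col] by blast
  have cross: "fst (f p) = fst p \<and> degree E (fst p) < \<Delta>" if "p \<in> A" "snd (f p) \<noteq> snd p" for p
    using f that by (intro twin_weight_pos_other_side) auto
  define D where "D = {v\<in>V. snd (f (v, True))}"
  define \<sigma> where "\<sigma> v = fst (f (v, True))" for v
  have f_D: "f (v, True) = (\<sigma> v, True)" if "v \<in> D" for v
    using that unfolding D_def \<sigma>_def by (simp add: prod_eq_iff)
  have D_A: "(v, True) \<in> A" if "v \<in> D" for v using that unfolding D_def A_def by simp
  have "inj_on \<sigma> D"
  proof (rule inj_onI)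
    fix u v assume "u \<in> D" "v \<in> D" "\<sigma> u = \<sigma> v"
    then have "f (u, True) = f (v, True)" by (simp add: f_D)
    with f_inj \<open>u \<in> D\<close> \<open>v \<in> D\<close> show "u = v" by (auto dest: inj_onD D_A)
  qed
  moreover have "\<forall>v\<in>D. {v, \<sigma> v} \<in> E"
  proof
    fix v assume "v \<in> D"
    then have "0 < twin_weight E \<Delta> (v, True) (\<sigma> v, True)" using f D_A f_D by metis
    with twin_weight_pos_same_side show "{v, \<sigma> v} \<in> E" by fastforce
  qed
  moreover have "{v\<in>V. degree E v = \<Delta>} \<subseteq> D \<inter> \<sigma> ` D"
  proof
    fix v assume v: "v \<in> {v\<in>V. degree E v = \<Delta>}"
    then have vA: "(v, True) \<in> A" unfolding A_def by simp
    have "v \<in> D" using cross[OF vA] v unfolding D_def by auto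
    have "f ` A = A" using f f_inj by (intro endo_inj_surj[OF A]) auto
    then obtain p where p: "p \<in> A" "f p = (v, True)" using vA by (metis imageE)
    then have "snd p = True" using cross[OF p(1)] v by auto
    then obtain u where "p = (u, True)" by (cases p) auto
    then have "u \<in> D" "\<sigma> u = v" using p unfolding D_def A_def \<sigma>_def by auto
    with \<open>v \<in> D\<close> show "v \<in> D \<inter> \<sigma> ` D" by blast
  qed
  moreover have "D \<subseteq> V" unfolding D_def by blast
  ultimately show ?thesis unfolding path_cycle_map_def by blast
qed

section \<open>Covering the interior vertices by few edges\<close>

text \<open>Odd girth at least \<open>l\<close>; unlike \<open>l \<le> odd_girth E\<close> this also makes sense for bipartite graphs.\<close>
definition odd_cycles_at_least :: "'a set set \<Rightarrow> nat \<Rightarrow> bool" where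
  "odd_cycles_at_least E l \<longleftrightarrow> (\<forall>cs. is_cycle E cs \<and> odd (length cs) \<longrightarrow> l \<le> length cs)"

lemma odd_girth_le: "is_cycle E cs \<Longrightarrow> odd (length cs) \<Longrightarrow> odd_girth E \<le> length cs"
  unfolding odd_girth_def by (rule Least_le) blast

lemma ceil_half_mult_le:
  fixes k L :: nat
  assumes "even L \<or> 2 * k + 1 \<le> L"
  shows "(2 * k + 1) * ((L + 1) div 2) \<le> (k + 1) * L"
proof (cases "even L")
  case True
  then obtain m where "L = 2 * m" by blast
  then show ?thesis by (simp add: algebra_simps)
next
  case False
  then obtain m where m: "L = 2 * m + 1" using oddE by blast
  then have "k \<le> m" using assms False by simp
  then have "(2 * k + 1) * (m + 1) \<le> (k + 1) * (2 * m + 1)" by (simp add: algebra_simps)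
  then show ?thesis using m by simp
qed

lemma walk_edge_cover:
  assumes "\<And>i. i < L \<Longrightarrow> {g i, g (Suc i)} \<in> E"
  shows "\<exists>P\<subseteq>E. g ` {..<L} \<subseteq> \<Union>P \<and> card P \<le> (L + 1) div 2"
proof (intro exI conjI)
  define P where "P = (\<lambda>j. {g (2 * j), g (Suc (2 * j))}) ` {..<(L + 1) div 2}"
  have "2 * j < L" if "j < (L + 1) div 2" for j using that by linarith
  then show "P \<subseteq> E" unfolding P_def using assms by blast
  show "g ` {..<L} \<subseteq> \<Union>P"
  proof
    fix x assume "x \<in> g ` {..<L}"
    then obtain i where "i < L" "x = g i" by blast
    moreover have "i = 2 * (i div 2) \<or> i = Suc (2 * (i div 2))" by presburger
    ultimately have "i div 2 < (L + 1) div 2" "x \<in> {g (2 * (i div 2)), g (Suc (2 * (i div 2)))}"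
      by auto
    then show "x \<in> \<Union>P" unfolding P_def by blast
  qed
  show "card P \<le> (L + 1) div 2" unfolding P_def using card_image_le[of "{..<(L + 1) div 2}"] by simp
qed

lemma self_in_orbit_if_inj_on:
  assumes "finite D" and "inj_on \<sigma> D" and "\<sigma> ` D = D" and "v \<in> D"
  shows "v \<in> orbit \<sigma> v"
proof -
  define \<tau> where "\<tau> x = (if x \<in> D then \<sigma> x else x)" for x
  have "bij_betw \<tau> D D"
    using assms(2,3) unfolding \<tau>_def bij_betw_def by (auto cong: inj_on_cong image_cong)
  then have "\<tau> permutes D" by (rule bij_imp_permutes) (simp add: \<tau>_def)
  then have "v \<in> orbit \<tau> v" using assms(1) by (intro permutation_self_in_orbit permutes_imp_permutation)
  moreover have "orbit \<tau> v = orbit \<sigma> v" using assms(3,4) by (intro orbit_cong0[of v D]) (auto simp: \<tau>_def)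
  ultimately show ?thesis by simp
qed

lemma orbit_edge_cover:
  assumes G: "simple_graph V E"
    and girth: "odd_cycles_at_least E (2 * k + 1)"
    and v: "v \<in> orbit \<sigma> v" and edges: "\<forall>x\<in>orbit \<sigma> v. {x, \<sigma> x} \<in> E"
  shows "\<exists>P\<subseteq>E. orbit \<sigma> v \<subseteq> \<Union>P \<and> (2 * k + 1) * card P \<le> (k + 1) * card (orbit \<sigma> v)"
proof -
  define L where "L = funpow_dist1 \<sigma> v v"
  define g where "g n = (\<sigma> ^^ n) v" for n
  have orbit: "orbit \<sigma> v = g ` {..<L}"
    unfolding g_def L_def lessThan_atLeast0 by (rule orbit_conv_funpow_dist1[OF v])
  have inj: "inj_on g {..<L}"
    unfolding g_def L_def lessThan_atLeast0 by (rule inj_on_funpow_dist1[OF v])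
  have period: "g L = v" unfolding g_def L_def by (rule funpow_dist1_prop[OF v])
  have step: "{g i, g (Suc i)} \<in> E" for i
    using edges funpow_in_orbit[OF v, of i] by (simp add: g_def)
  obtain P where P: "P \<subseteq> E" "g ` {..<L} \<subseteq> \<Union>P" "card P \<le> (L + 1) div 2"
    using walk_edge_cover[of L g E] step by blast
  have "L \<noteq> 1"
  proof
    assume "L = 1"
    then have "{v} \<in> E" using step[of 0] period by (simp add: g_def)
    then show False using simple_graph_no_loop[OF G] by blast
  qed
  have "even L \<or> 2 * k + 1 \<le> L"
  proof (cases "even L")
    case False
    then obtain m where "L = 2 * m + 1" by (rule oddE)
    with \<open>L \<noteq> 1\<close> have "3 \<le> L" by simp
    have "g ((Suc i) mod L) = g (Suc i)" for i
      using period unfolding g_def L_def by (intro funpow_mod_eq) simp_all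
    then have "is_cycle E (map g [0..<L])"
      using \<open>3 \<le> L\<close> inj step unfolding is_cycle_def
      by (simp add: distinct_map atLeast0LessThan nth_map_upt)
    then show ?thesis using girth False unfolding odd_cycles_at_least_def by fastforce
  qed simp
  then have "(2 * k + 1) * card P \<le> (k + 1) * L"
    using P(3) ceil_half_mult_le by (meson mult_le_mono2 order_trans)
  moreover have "card (orbit \<sigma> v) = L" using orbit inj by (simp add: card_image)
  ultimately show ?thesis using P orbit by auto
qed

lemma path_start_peel:
  assumes G: "simple_graph V E" and \<sigma>: "path_cycle_map E D \<sigma>" and v: "v \<in> D" "v \<notin> \<sigma> ` D"
  shows "\<exists>R P. R \<subseteq> D \<and> R \<noteq> {} \<and> P \<subseteq> E \<and> (2 * k + 1) * card P \<le> (k + 1) * card R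
    \<and> D \<inter> \<sigma> ` D \<subseteq> (D - R) \<inter> \<sigma> ` (D - R) \<union> \<Union>P"
proof (cases "\<sigma> v \<in> D")
  case False
  have "D \<inter> \<sigma> ` D \<subseteq> (D - {v}) \<inter> \<sigma> ` (D - {v})"
  proof
    fix x assume "x \<in> D \<inter> \<sigma> ` D"
    then obtain y where "x \<in> D" "y \<in> D" "x = \<sigma> y" by blast
    moreover from calculation have "x \<noteq> v" "y \<noteq> v" using v False by auto
    ultimately show "x \<in> (D - {v}) \<inter> \<sigma> ` (D - {v})" by blast
  qed
  then show ?thesis using v by (intro exI[of _ "{v}"] exI[of _ "{}"]) auto
next
  case True
  have edge: "{\<sigma> v, \<sigma> (\<sigma> v)} \<in> E" using \<sigma> True unfolding path_cycle_map_def by blast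
  have "\<sigma> v \<noteq> v" using \<sigma> v(1) simple_graph_no_loop[OF G, of v]
    unfolding path_cycle_map_def by force
  then have "(2 * k + 1) * card {{\<sigma> v, \<sigma> (\<sigma> v)}} \<le> (k + 1) * card {v, \<sigma> v}"
    by (simp add: eq_commute[of v])
  moreover have "D \<inter> \<sigma> ` D \<subseteq> (D - {v, \<sigma> v}) \<inter> \<sigma> ` (D - {v, \<sigma> v}) \<union> \<Union>{{\<sigma> v, \<sigma> (\<sigma> v)}}"
  proof
    fix x assume "x \<in> D \<inter> \<sigma> ` D"
    then obtain y where "x \<in> D" "y \<in> D" "x = \<sigma> y" by blast
    moreover from calculation have "x \<noteq> v" using v by auto
    ultimately show "x \<in> (D - {v, \<sigma> v}) \<inter> \<sigma> ` (D - {v, \<sigma> v}) \<union> \<Union>{{\<sigma> v, \<sigma> (\<sigma> v)}}"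
      by (cases "y = v \<or> y = \<sigma> v") auto
  qed
  ultimately show ?thesis using v(1) True edge
    by (intro exI[of _ "{v, \<sigma> v}"] exI[of _ "{{\<sigma> v, \<sigma> (\<sigma> v)}}"]) auto
qed

lemma cycle_peel:
  assumes G: "simple_graph V E"
    and girth: "odd_cycles_at_least E (2 * k + 1)"
    and "finite D" and \<sigma>: "path_cycle_map E D \<sigma>" and closed: "\<sigma> ` D = D" and v: "v \<in> D"
  shows "\<exists>R P. R \<subseteq> D \<and> R \<noteq> {} \<and> P \<subseteq> E \<and> (2 * k + 1) * card P \<le> (k + 1) * card R
    \<and> D \<inter> \<sigma> ` D \<subseteq> (D - R) \<inter> \<sigma> ` (D - R) \<union> \<Union>P"
proof -
  have "v \<in> orbit \<sigma> v"
    using assms(3) \<sigma> closed v unfolding path_cycle_map_def by (intro self_in_orbit_if_inj_on) auto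
  have orbit_D: "orbit \<sigma> v \<subseteq> D"
  proof
    fix x assume "x \<in> orbit \<sigma> v"
    then show "x \<in> D" using closed v by (induction rule: orbit.induct) auto
  qed
  then have "\<forall>x\<in>orbit \<sigma> v. {x, \<sigma> x} \<in> E" using \<sigma> unfolding path_cycle_map_def by blast
  from orbit_edge_cover[OF G girth \<open>v \<in> orbit \<sigma> v\<close> this] obtain P
    where P: "P \<subseteq> E" "orbit \<sigma> v \<subseteq> \<Union>P" "(2 * k + 1) * card P \<le> (k + 1) * card (orbit \<sigma> v)"
    by blast
  moreover have "D \<inter> \<sigma> ` D \<subseteq> (D - orbit \<sigma> v) \<inter> \<sigma> ` (D - orbit \<sigma> v) \<union> \<Union>P"
  proof
    fix x assume "x \<in> D \<inter> \<sigma> ` D"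
    then obtain y where "x \<in> D" "y \<in> D" "x = \<sigma> y" by blast
    moreover have "x \<in> orbit \<sigma> v" if "y \<in> orbit \<sigma> v" using that \<open>x = \<sigma> y\<close> by (simp add: orbit.step)
    ultimately show "x \<in> (D - orbit \<sigma> v) \<inter> \<sigma> ` (D - orbit \<sigma> v) \<union> \<Union>P" using P(2) by blast
  qed
  ultimately show ?thesis using orbit_D orbit_nonempty[of \<sigma> v] by blast
qed

lemma interior_edge_cover:
  assumes G: "simple_graph V E"
    and girth: "odd_cycles_at_least E (2 * k + 1)"
    and "finite D" and "path_cycle_map E D \<sigma>"
  shows "\<exists>F\<subseteq>E. D \<inter> \<sigma> ` D \<subseteq> \<Union>F \<and> (2 * k + 1) * card F \<le> (k + 1) * card D"
  using assms(3,4)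
proof (induction "card D" arbitrary: D rule: less_induct)
  case less
  note D = less.prems(1) and \<sigma> = less.prems(2)
  show ?case
  proof (cases "D = {}")
    case False
    have "\<exists>R P. R \<subseteq> D \<and> R \<noteq> {} \<and> P \<subseteq> E \<and> (2 * k + 1) * card P \<le> (k + 1) * card R
      \<and> D \<inter> \<sigma> ` D \<subseteq> (D - R) \<inter> \<sigma> ` (D - R) \<union> \<Union>P"
    proof (cases "D \<subseteq> \<sigma> ` D")
      case True
      then have "\<sigma> ` D = D"
        using D \<sigma> unfolding path_cycle_map_def by (intro card_subset_eq[symmetric]) (simp_all add: card_image)
      obtain v where "v \<in> D" using False by blast
      with G girth D \<sigma> \<open>\<sigma> ` D = D\<close> show ?thesis by (rule cycle_peel)
    next
      case False
      then obtain v where "v \<in> D" "v \<notin> \<sigma> ` D" by blast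
      with G \<sigma> show ?thesis by (rule path_start_peel)
    qed
    then obtain R P where R: "R \<subseteq> D" "R \<noteq> {}" and P: "P \<subseteq> E" "(2 * k + 1) * card P \<le> (k + 1) * card R"
      and cov: "D \<inter> \<sigma> ` D \<subseteq> (D - R) \<inter> \<sigma> ` (D - R) \<union> \<Union>P" by blast
    have "card (D - R) < card D" using R D by (intro psubset_card_mono) auto
    moreover have "path_cycle_map E (D - R) \<sigma>" using \<sigma> by (rule path_cycle_map_subset) blast
    ultimately have "\<exists>F\<subseteq>E. (D - R) \<inter> \<sigma> ` (D - R) \<subseteq> \<Union>F
        \<and> (2 * k + 1) * card F \<le> (k + 1) * card (D - R)"
      using D by (intro less.hyps) auto
    then obtain F where F: "F \<subseteq> E" "(D - R) \<inter> \<sigma> ` (D - R) \<subseteq> \<Union>F"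
      "(2 * k + 1) * card F \<le> (k + 1) * card (D - R)" by blast
    have "card D = card (D - R) + card R" using R D by (simp add: card_Diff_subset card_mono finite_subset)
    have "(2 * k + 1) * card (F \<union> P) \<le> (2 * k + 1) * (card F + card P)"
      by (intro mult_le_mono2 card_Un_le)
    also have "\<dots> \<le> (k + 1) * card D"
      using F(3) P(2) \<open>card D = card (D - R) + card R\<close> by (simp add: algebra_simps)
    finally have "(2 * k + 1) * card (F \<union> P) \<le> (k + 1) * card D" .
    moreover have "D \<inter> \<sigma> ` D \<subseteq> \<Union>(F \<union> P)" using F(2) cov by blast
    ultimately show ?thesis using F(1) P(1) by (intro exI[of _ "F \<union> P"]) simp
  qed (intro exI[of _ "{}"], simp)
qed

section \<open>Lowering the maximum degree\<close>

lemma degree_le_max_degree: "finite V \<Longrightarrow> v \<in> V \<Longrightarrow> degree E v \<le> max_degree V E"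
  unfolding max_degree_def by auto

lemma max_degree_eqI:
  assumes "finite V" and "x \<in> V" and "degree E x = m" and "\<And>u. u \<in> V \<Longrightarrow> degree E u \<le> m"
  shows "max_degree V E = m"
proof -
  have "max_degree V E = Max (degree E ` V)" unfolding max_degree_def using assms(2) by auto
  also have "\<dots> = m" using assms by (intro Max_eqI) auto
  finally show ?thesis .
qed

lemma degree_Diff_less:
  assumes "finite E" and "e \<in> E" and "e \<in> F" and "v \<in> e"
  shows "degree (E - F) v < degree E v"
  unfolding degree_def using assms by (intro psubset_card_mono) auto

lemma degree_Diff_single:
  assumes "finite E" and "e \<in> E" and "{e'\<in>F. v \<in> e'} = {e}"
  shows "degree (E - F) v = degree E v - 1"
proof -
  have "{e'\<in>E - F. v \<in> e'} = {e'\<in>E. v \<in> e'} - {e}" using assms(3) by blast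
  moreover have "e \<in> {e'\<in>E. v \<in> e'}" using assms(2,3) by blast
  ultimately show ?thesis unfolding degree_def using assms(1) by (simp add: card_Diff_singleton)
qed

lemma es_Delta_le:
  assumes "finite E" and "F \<subseteq> E" and "max_degree V (E - F) = max_degree V E - 1"
  shows "es_Delta V E \<le> card F"
  unfolding es_Delta_def
proof (rule Min_le)
  have "{card F | F. F \<subseteq> E \<and> max_degree V (E - F) = max_degree V E - 1} \<subseteq> card ` Pow E" by blast
  then show "finite {card F | F. F \<subseteq> E \<and> max_degree V (E - F) = max_degree V E - 1}"
    by (rule finite_subset) (simp add: assms(1))
qed (use assms in blast)

lemma max_degree_Diff_cover:
  assumes "finite V" and "finite E" and "F \<subseteq> E"
    and cover: "{v\<in>V. degree E v = max_degree V E} \<subseteq> \<Union>F"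
    and x: "x \<in> V" "degree E x = max_degree V E" and e: "{e\<in>F. x \<in> e} = {e}"
  shows "max_degree V (E - F) = max_degree V E - 1"
proof -
  have "degree (E - F) x = max_degree V E - 1"
    using x e assms(2,3) by (subst degree_Diff_single[of _ e]) auto
  moreover have "degree (E - F) u \<le> max_degree V E - 1" if "u \<in> V" for u
  proof (cases "degree E u = max_degree V E")
    case True
    then obtain e' where "e' \<in> F" "u \<in> e'" using cover \<open>u \<in> V\<close> by blast
    then show ?thesis using degree_Diff_less[OF assms(2)] assms(3) True by fastforce
  next
    case False
    then have "degree E u < max_degree V E" using degree_le_max_degree[OF assms(1) that, of E] by simp
    moreover have "degree (E - F) u \<le> degree E u" unfolding degree_def
      using assms(2) by (intro card_mono) auto
    ultimately show ?thesis by simp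
  qed
  ultimately show ?thesis using x assms(1) by (intro max_degree_eqI) auto
qed

lemma es_Delta_le_cover:
  assumes V: "finite V" and E: "finite E" and "F \<subseteq> E"
    and cover: "{v\<in>V. degree E v = max_degree V E} \<subseteq> \<Union>F"
  shows "es_Delta V E \<le> card F"
proof (cases "V = {}")
  case True
  then show ?thesis using assms by (intro es_Delta_le) (simp_all add: max_degree_def)
next
  case False
  \<comment> \<open>In a smallest cover, some vertex of maximum degree lies on only one of its edges.\<close>
  define S where "S = {v\<in>V. degree E v = max_degree V E}"
  obtain F0 where F0: "F0 \<subseteq> F" "S \<subseteq> \<Union>F0"
    and min: "\<And>F'. F' \<subseteq> F \<Longrightarrow> S \<subseteq> \<Union>F' \<Longrightarrow> card F0 \<le> card F'"
    using ex_has_least_nat[of "\<lambda>F'. F' \<subseteq> F \<and> S \<subseteq> \<Union>F'" F card] cover unfolding S_def by auto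
  have "max_degree V E \<in> degree E ` V" unfolding max_degree_def using V False by simp
  then obtain s where "s \<in> S" unfolding S_def by auto
  then obtain e where e: "e \<in> F0" "s \<in> e" using F0(2) by blast
  have "finite F0" using F0(1) \<open>F \<subseteq> E\<close> E by (meson finite_subset)
  then have "card (F0 - {e}) < card F0" using e(1) by (rule card_Diff1_less)
  then obtain x where x: "x \<in> S" "x \<notin> \<Union>(F0 - {e})" using min[of "F0 - {e}"] F0(1) by force
  then have "{e'\<in>F0. x \<in> e'} = {e}" using F0(2) by blast
  then have "max_degree V (E - F0) = max_degree V E - 1"
    using x F0 \<open>F \<subseteq> E\<close> V E unfolding S_def by (intro max_degree_Diff_cover) auto
  then have "es_Delta V E \<le> card F0" using E F0(1) \<open>F \<subseteq> E\<close> by (intro es_Delta_le) auto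
  also have "\<dots> \<le> card F" using F0(1) \<open>F \<subseteq> E\<close> E by (intro card_mono) (auto intro: finite_subset)
  finally show ?thesis .
qed

lemma es_Delta_odd_cycles_bound:
  assumes G: "simple_graph V E" and girth: "odd_cycles_at_least E (2 * k + 1)"
  shows "(2 * k + 1) * es_Delta V E \<le> (k + 1) * card V"
proof -
  have V: "finite V" using G unfolding simple_graph_def by blast
  have E: "finite E" using G by (rule simple_graph_finite_edges)
  show ?thesis
  proof (cases "max_degree V E = 0")
    case True
    have "es_Delta V E \<le> card ({} :: 'a set set)" using E True by (intro es_Delta_le) auto
    then show ?thesis by simp
  next
    case False
    then have "0 < max_degree V E" by simp
    then obtain D \<sigma> where D: "D \<subseteq> V" "path_cycle_map E D \<sigma>"
      and max_deg: "{v\<in>V. degree E v = max_degree V E} \<subseteq> D \<inter> \<sigma> ` D"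
      using path_cycle_map_through_max_degree[OF G _ degree_le_max_degree[OF V]] by blast
    have "finite D" using D(1) V by (rule finite_subset)
    from interior_edge_cover[OF G girth this D(2)] obtain F where
      F: "F \<subseteq> E" "D \<inter> \<sigma> ` D \<subseteq> \<Union>F" "(2 * k + 1) * card F \<le> (k + 1) * card D" by blast
    have "es_Delta V E \<le> card F" using V E F(1) max_deg F(2) by (intro es_Delta_le_cover) auto
    moreover have "card D \<le> card V" using V D(1) by (rule card_mono)
    ultimately show ?thesis using F(3) by (meson mult_le_mono2 order_trans)
  qed
qed

theorem theorem3p3:
  fixes V :: "'a set" and E :: "'a set set" and k :: nat
  assumes "simple_graph V E"
    and "k \<ge> 1"
    and "has_odd_cycle E"
    and "odd_girth E = 2 * k + 1"
  shows "real (es_Delta V E) \<le> (real k + 1) / (2 * real k + 1) * real (card V)"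
proof -
  have "odd_cycles_at_least E (2 * k + 1)"
    using odd_girth_le assms(4) unfolding odd_cycles_at_least_def by metis
  then have "(2 * k + 1) * es_Delta V E \<le> (k + 1) * card V"
    by (rule es_Delta_odd_cycles_bound[OF assms(1)])
  then have "real ((2 * k + 1) * es_Delta V E) \<le> real ((k + 1) * card V)"
    by (simp only: of_nat_le_iff)
  then have "(2 * real k + 1) * real (es_Delta V E) \<le> (real k + 1) * real (card V)"
    by (simp add: algebra_simps)
  moreover have "0 < 2 * real k + 1" by simp
  ultimately show ?thesis by (simp add: field_simps)
qed

end
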